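(* Let $T:X\rightrightarrows X^*$ be a multivalued operator. If $S(T,K)=S(T^\rho,K)$ for all $K\subset X$, or $M(T,K)=M(T^\rho,K)$ for all $K\subset X$, then $T$ is pre-maximal pseudomonotone.
   Context: $X$ is a real Banach space with dual $X^*$ and pairing $\langle x,x^*\rangle=x^*(x)$. A multivalued operator $T:X\rightrightarrows X^*$ is identified with its graph $T\subset X\times X^*$; $T(x)=\{x^*:(x,x^* )\in T\}$. For $K\subset X$: $S(T,K)=\{x\in K: \exists x^*\in T(x),\ \langle y-x,x^*\rangle\ge0\ \forall y\in K\}$ and $M(T,K)=\{x\in K: \langle x-y,y^*\rangle\le0\ \forall (y,y^* )\in T \text{ with } y\in K\}$. For $(x,x^* ),(y,y^* )\in X\times X^*$, write $(x,x^* )\sim_p(y,y^* )$ if either $\min\{\langle x-y,y^*\rangle,\langle y-x,x^*\rangle\}<0$ or $\langle x-y,y^*\rangle=\langle y-x,x^*\rangle=0$. The pseudomonotone polar is $T^\rho=\{(x,x^* ): (x,x^* )\sim_p(y,y^* )\ \forall (y,y^* )\in T\}$. $T$ is pseudomonotone if for all $(x,x^* ),(y,y^* )\in T$, $\langle y-x,x^*\rangle\ge0$ implies $\langle y-x,y^*\rangle\ge0$; $T$ is pre-maximal pseudomonotone if both $T$ and $T^\rho$ are pseudomonotone. *)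

theory Defs
  imports "HOL-Analysis.Analysis"
begin

text \<open>X is a real Banach space ('a::banach), X* is the space of continuous linear
functionals (type blinfun); the pairing is blinfun application.
A multivalued operator is identified with its graph.\<close>

type_synonym 'a mop = "('a \<times> ('a \<Rightarrow>\<^sub>L real)) set"

definition pair :: "'a::banach \<Rightarrow> ('a \<Rightarrow>\<^sub>L real) \<Rightarrow> real" where
  "pair x xs = blinfun_apply xs x"

definition SolStampacchia :: "'a::banach mop \<Rightarrow> 'a set \<Rightarrow> 'a set" where
  "SolStampacchia T K = {x \<in> K. \<exists>xs. (x, xs) \<in> T \<and> (\<forall>y\<in>K. pair (y - x) xs \<ge> 0)}"

definition SolMinty :: "'a::banach mop \<Rightarrow> 'a set \<Rightarrow> 'a set" where
  "SolMinty T K = {x \<in> K. \<forall>y ys. (y, ys) \<in> T \<and> y \<in> K \<longrightarrow> pair (x - y) ys \<le> 0}"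

definition psim :: "'a::banach \<times> ('a \<Rightarrow>\<^sub>L real) \<Rightarrow> 'a \<times> ('a \<Rightarrow>\<^sub>L real) \<Rightarrow> bool" where
  "psim p q = (case p of (x, xs) \<Rightarrow> case q of (y, ys) \<Rightarrow>
      min (pair (x - y) ys) (pair (y - x) xs) < 0 \<or>
      (pair (x - y) ys = 0 \<and> pair (y - x) xs = 0))"

definition pm_polar :: "'a::banach mop \<Rightarrow> 'a mop" where
  "pm_polar T = {p. \<forall>q\<in>T. psim p q}"

definition pseudomonotone :: "'a::banach mop \<Rightarrow> bool" where
  "pseudomonotone T = (\<forall>x xs y ys. (x, xs) \<in> T \<and> (y, ys) \<in> T \<longrightarrow>
      pair (y - x) xs \<ge> 0 \<longrightarrow> pair (y - x) ys \<ge> 0)"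

definition pre_maximal_pseudomonotone :: "'a::banach mop \<Rightarrow> bool" where
  "pre_maximal_pseudomonotone T = (pseudomonotone T \<and> pseudomonotone (pm_polar T))"

end

theory Submission
  imports Defs
begin

text \<open>Both hypotheses are only needed on two-point sets \<open>K = {x, y}\<close>. Every element of \<open>T\<close> is
  \<open>\<sim>\<^sub>p\<close>-related to every element of \<open>T\<^sup>\<rho>\<close>, and \<open>\<sim>\<^sub>p\<close> transports the sign condition of
  pseudomonotonicity from one element to the other. So if \<open>x\<close> solves the variational problem on
  \<open>{x, y}\<close> for one operator, it solves it for the other, and the resulting dual element at \<open>x\<close>
  (Stampacchia) or the Minty inequality at \<open>y\<close> yields \<open>\<langle>y - x, y\<^sup>*\<rangle> \<ge> 0\<close>.\<close>

lemma pair_minus_swap: "pair (x - y) a = - pair (y - x) a"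
  by (simp add: pair_def blinfun.diff_right)

lemma pair_zero_left [simp]: "pair 0 a = 0"
  by (simp add: pair_def)

lemma psim_commute: "psim p q = psim q p"
  by (cases p; cases q) (auto simp: psim_def min.commute)

lemma psim_nonneg_transfer:
  assumes "psim (x, xs) (y, ys)" and "pair (y - x) xs \<ge> 0"
  shows "pair (y - x) ys \<ge> 0"
  using assms pair_minus_swap[of x y ys]
  unfolding psim_def by (auto simp: min_def split: if_splits)

lemma psim_pm_polar: "p \<in> pm_polar T \<Longrightarrow> q \<in> T \<Longrightarrow> psim p q"
  by (simp add: pm_polar_def)

lemma pseudomonotone_if_Stampacchia_subset:
  assumes related: "\<And>p q. p \<in> A \<Longrightarrow> q \<in> B \<Longrightarrow> psim p q"
    and sub: "\<And>K. SolStampacchia A K \<subseteq> SolStampacchia B K"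
  shows "pseudomonotone A"
  unfolding pseudomonotone_def
proof (intro allI impI, elim conjE)
  fix x xs y ys
  assume x: "(x, xs) \<in> A" and y: "(y, ys) \<in> A" and sign: "pair (y - x) xs \<ge> 0"
  have "x \<in> SolStampacchia A {x, y}"
    using x sign by (auto simp: SolStampacchia_def)
  with sub have "x \<in> SolStampacchia B {x, y}" by blast
  then obtain xb where xb: "(x, xb) \<in> B" and "pair (y - x) xb \<ge> 0"
    by (auto simp: SolStampacchia_def)
  moreover have "psim (x, xb) (y, ys)"
    using related[OF y xb] by (simp add: psim_commute)
  ultimately show "pair (y - x) ys \<ge> 0"
    using psim_nonneg_transfer by blast
qed

lemma pseudomonotone_if_Minty_subset:
  assumes related: "\<And>p q. p \<in> A \<Longrightarrow> q \<in> B \<Longrightarrow> psim p q"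
    and sub: "\<And>K. SolMinty B K \<subseteq> SolMinty A K"
  shows "pseudomonotone A"
  unfolding pseudomonotone_def
proof (intro allI impI, elim conjE)
  fix x xs y ys
  assume x: "(x, xs) \<in> A" and y: "(y, ys) \<in> A" and sign: "pair (y - x) xs \<ge> 0"
  have "pair (x - z) zs \<le> 0" if "(z, zs) \<in> B" "z \<in> {x, y}" for z zs
  proof (cases "z = x")
    case False
    with that have "psim (x, xs) (y, zs)"
      using related[OF x] by auto
    with sign False that show ?thesis
      using psim_nonneg_transfer pair_minus_swap[of x y zs] by fastforce
  qed simp
  then have "x \<in> SolMinty B {x, y}"
    by (auto simp: SolMinty_def)
  with sub have "x \<in> SolMinty A {x, y}" by blast
  with y have "pair (x - y) ys \<le> 0"
    by (auto simp: SolMinty_def)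
  then show "pair (y - x) ys \<ge> 0"
    using pair_minus_swap[of x y ys] by linarith
qed

theorem mainTheorem19:
  fixes T :: "'a::banach mop"
  assumes "(\<forall>K. SolStampacchia T K = SolStampacchia (pm_polar T) K)
         \<or> (\<forall>K. SolMinty T K = SolMinty (pm_polar T) K)"
  shows "pre_maximal_pseudomonotone T"
proof -
  have T_polar: "psim p q" if "p \<in> T" "q \<in> pm_polar T" for p q
    using psim_pm_polar[OF that(2,1)] by (simp add: psim_commute)
  have polar_T: "psim p q" if "p \<in> pm_polar T" "q \<in> T" for p q
    using psim_pm_polar[OF that] .
  from assms show ?thesis
    unfolding pre_maximal_pseudomonotone_def
  proof
    assume "\<forall>K. SolStampacchia T K = SolStampacchia (pm_polar T) K"
    then show "pseudomonotone T \<and> pseudomonotone (pm_polar T)"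
      using pseudomonotone_if_Stampacchia_subset[OF T_polar]
        pseudomonotone_if_Stampacchia_subset[OF polar_T] by simp
  next
    assume "\<forall>K. SolMinty T K = SolMinty (pm_polar T) K"
    then show "pseudomonotone T \<and> pseudomonotone (pm_polar T)"
      using pseudomonotone_if_Minty_subset[OF T_polar]
        pseudomonotone_if_Minty_subset[OF polar_T] by simp
  qed
qed

end
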